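(* Let $F\leq F'\leq\hat F$ be permutation groups on $\Omega$. The closure of $G(F,F')$ in the topological group $\mathrm{Aut}(\mathcal{T}_d)$ (permutation topology) is $U(F')$. In particular, $G(F)$ is dense in $\mathrm{Aut}(\mathcal{T}_d)$ if and only if $F$ is transitive on $\Omega$.
   Context: Standing notation. $\Omega$ is a finite set with $d=|\Omega|\geq 3$, $\mathcal{T}_d$ is the $d$-regular tree with vertex set $V$ and set $E$ of non-oriented edges, and $\mathrm{Aut}(\mathcal{T}_d)$ carries the permutation topology (basis of identity neighbourhoods: pointwise stabilizers of finite vertex sets). Fix a coloring $c:E\to\Omega$ such that for every vertex $v$ its restriction $c_v$ to the set $E(v)$ of edges containing $v$ is a bijection onto $\Omega$. For $g\in\mathrm{Aut}(\mathcal{T}_d)$ and $v\in V$, the local permutation is $\sigma(g,v)=c_{gv}\circ g_v\circ c_v^{-1}\in\mathrm{Sym}(\Omega)$, where $g_v:E(v)\to E(gv)$ is induced by $g$. For $F\leq\mathrm{Sym}(\Omega)$: $U(F)=\{g:\sigma(g,v)\in F \ \forall v\}$; $G(F)=\{g:\sigma(g,v)\in F \text{ for all but finitely many } v\}$; $\hat F$ is the subgroup of permutations preserving each $F$-orbit. For $F\leq F'\leq\hat F$, $G(F,F')=G(F)\cap U(F')$. *)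

theory Defs
  imports "HOL-Analysis.Abstract_Topology" "HOL-Algebra.Bij"
begin

text \<open>The tree is given by a vertex type 'v and a symmetric irreflexive adjacency
relation adj; the (non-oriented) edge colouring is a function c with c u v = c v u
for adjacent u, v (the colour of the edge {u,v}).\<close>

definition reduced_walk :: "('v \<Rightarrow> 'v \<Rightarrow> bool) \<Rightarrow> 'v list \<Rightarrow> bool" where
  "reduced_walk adj xs \<longleftrightarrow>
     (\<forall>i. Suc i < length xs \<longrightarrow> adj (xs ! i) (xs ! Suc i)) \<and>
     (\<forall>i. Suc (Suc i) < length xs \<longrightarrow> xs ! i \<noteq> xs ! Suc (Suc i))"

definition is_tree :: "('v \<Rightarrow> 'v \<Rightarrow> bool) \<Rightarrow> bool" where
  "is_tree adj \<longleftrightarrow>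
     (\<forall>u v. adj u v \<longrightarrow> adj v u) \<and> (\<forall>v. \<not> adj v v) \<and>
     (\<forall>u v. adj\<^sup>*\<^sup>* u v) \<and>
     (\<not> (\<exists>xs. reduced_walk adj xs \<and> length xs \<ge> 2 \<and> hd xs = last xs))"

definition colored_regular_tree ::
  "'c set \<Rightarrow> nat \<Rightarrow> ('v \<Rightarrow> 'v \<Rightarrow> bool) \<Rightarrow> ('v \<Rightarrow> 'v \<Rightarrow> 'c) \<Rightarrow> bool" where
  "colored_regular_tree \<Omega> d adj c \<longleftrightarrow>
     finite \<Omega> \<and> card \<Omega> = d \<and> is_tree adj \<and>
     (\<forall>v. finite {w. adj v w} \<and> card {w. adj v w} = d) \<and>
     (\<forall>u v. adj u v \<longrightarrow> c u v = c v u) \<and>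
     (\<forall>v. bij_betw (c v) {w. adj v w} \<Omega>)"

definition Aut :: "('v \<Rightarrow> 'v \<Rightarrow> bool) \<Rightarrow> ('v \<Rightarrow> 'v) set" where
  "Aut adj = {g. bij g \<and> (\<forall>u v. adj u v \<longleftrightarrow> adj (g u) (g v))}"

text \<open>Permutation topology: the identity neighbourhoods have as basis the pointwise
stabilisers of finite vertex sets; hence the basic neighbourhoods of g are the cosets
{h. h agrees with g on S}, S finite.\<close>
definition perm_open :: "('v \<Rightarrow> 'v \<Rightarrow> bool) \<Rightarrow> ('v \<Rightarrow> 'v) set \<Rightarrow> bool" where
  "perm_open adj U \<longleftrightarrow> U \<subseteq> Aut adj \<and>
     (\<forall>g\<in>U. \<exists>S. finite S \<and> {h \<in> Aut adj. \<forall>x\<in>S. h x = g x} \<subseteq> U)"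

lemma istopology_perm_open: "istopology (perm_open adj)"
  unfolding istopology_def
proof safe
  fix S T assume S: "perm_open adj S" and T: "perm_open adj T"
  show "perm_open adj (S \<inter> T)"
    unfolding perm_open_def
  proof safe
    fix x assume "x \<in> S" "x \<in> T"
    then show "x \<in> Aut adj" using S unfolding perm_open_def by blast
  next
    fix g assume g: "g \<in> S" "g \<in> T"
    obtain A where A: "finite A" "{h \<in> Aut adj. \<forall>x\<in>A. h x = g x} \<subseteq> S"
      using S g unfolding perm_open_def by blast
    obtain B where B: "finite B" "{h \<in> Aut adj. \<forall>x\<in>B. h x = g x} \<subseteq> T"
      using T g unfolding perm_open_def by blast
    show "\<exists>C. finite C \<and> {h \<in> Aut adj. \<forall>x\<in>C. h x = g x} \<subseteq> S \<inter> T"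
      by (rule exI[of _ "A \<union> B"]) (use A B in auto)
  qed
next
  fix K assume K: "\<forall>U\<in>K. perm_open adj U"
  show "perm_open adj (\<Union>K)"
    unfolding perm_open_def
  proof safe
    fix x U assume "x \<in> U" "U \<in> K"
    then show "x \<in> Aut adj" using K unfolding perm_open_def by blast
  next
    fix g U assume g: "g \<in> U" "U \<in> K"
    then obtain A where "finite A" "{h \<in> Aut adj. \<forall>x\<in>A. h x = g x} \<subseteq> U"
      using K unfolding perm_open_def by blast
    then show "\<exists>S. finite S \<and> {h \<in> Aut adj. \<forall>x\<in>S. h x = g x} \<subseteq> \<Union>K"
      using g by blast
  qed
qed

definition perm_topology :: "('v \<Rightarrow> 'v \<Rightarrow> bool) \<Rightarrow> ('v \<Rightarrow> 'v) topology" where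
  "perm_topology adj = topology (perm_open adj)"

definition nbr :: "('v \<Rightarrow> 'v \<Rightarrow> bool) \<Rightarrow> ('v \<Rightarrow> 'v \<Rightarrow> 'c) \<Rightarrow> 'v \<Rightarrow> 'c \<Rightarrow> 'v" where
  "nbr adj c v a = (THE w. adj v w \<and> c v w = a)"

text \<open>sigma(g,v) = c_{gv} o g_v o c_v^{-1}, as an (extensional) permutation of Omega.\<close>
definition local_perm ::
  "'c set \<Rightarrow> ('v \<Rightarrow> 'v \<Rightarrow> bool) \<Rightarrow> ('v \<Rightarrow> 'v \<Rightarrow> 'c) \<Rightarrow> ('v \<Rightarrow> 'v) \<Rightarrow> 'v \<Rightarrow> ('c \<Rightarrow> 'c)" where
  "local_perm \<Omega> adj c g v = (\<lambda>a\<in>\<Omega>. c (g v) (g (nbr adj c v a)))"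

definition U_grp ::
  "'c set \<Rightarrow> ('v \<Rightarrow> 'v \<Rightarrow> bool) \<Rightarrow> ('v \<Rightarrow> 'v \<Rightarrow> 'c) \<Rightarrow> ('c \<Rightarrow> 'c) set \<Rightarrow> ('v \<Rightarrow> 'v) set" where
  "U_grp \<Omega> adj c F = {g \<in> Aut adj. \<forall>v. local_perm \<Omega> adj c g v \<in> F}"

definition G_grp ::
  "'c set \<Rightarrow> ('v \<Rightarrow> 'v \<Rightarrow> bool) \<Rightarrow> ('v \<Rightarrow> 'v \<Rightarrow> 'c) \<Rightarrow> ('c \<Rightarrow> 'c) set \<Rightarrow> ('v \<Rightarrow> 'v) set" where
  "G_grp \<Omega> adj c F = {g \<in> Aut adj. finite {v. local_perm \<Omega> adj c g v \<notin> F}}"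

definition G2_grp ::
  "'c set \<Rightarrow> ('v \<Rightarrow> 'v \<Rightarrow> bool) \<Rightarrow> ('v \<Rightarrow> 'v \<Rightarrow> 'c) \<Rightarrow> ('c \<Rightarrow> 'c) set \<Rightarrow> ('c \<Rightarrow> 'c) set \<Rightarrow> ('v \<Rightarrow> 'v) set" where
  "G2_grp \<Omega> adj c F F' = G_grp \<Omega> adj c F \<inter> U_grp \<Omega> adj c F'"

definition orbits :: "'c set \<Rightarrow> ('c \<Rightarrow> 'c) set \<Rightarrow> 'c set set" where
  "orbits \<Omega> F = {{f a | f. f \<in> F} | a. a \<in> \<Omega>}"

definition hat :: "'c set \<Rightarrow> ('c \<Rightarrow> 'c) set \<Rightarrow> ('c \<Rightarrow> 'c) set" where
  "hat \<Omega> F = {p \<in> Bij \<Omega>. \<forall>Orb \<in> orbits \<Omega> F. p ` Orb = Orb}"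

definition transitive_on :: "'c set \<Rightarrow> ('c \<Rightarrow> 'c) set \<Rightarrow> bool" where
  "transitive_on \<Omega> F \<longleftrightarrow> (\<forall>a\<in>\<Omega>. \<forall>b\<in>\<Omega>. \<exists>f\<in>F. f a = b)"

end

theory Submission
  imports Defs "HOL-Combinatorics.Transposition"
begin

text \<open>Fix a root. Every vertex is reached from it along a unique reduced word of colours, and an
  automorphism is determined by the image of the root together with its local permutations, which
  can be prescribed freely along reduced words subject only to a compatibility condition on each
  edge. An element g of U(F') is therefore approximated on any ball by the automorphism that copies
  the local permutations of g inside the ball and uses elements of F outside; F' \<subseteq> hat F
  guarantees that the single constraint at the boundary (on the colour pointing back into the
  ball) can be met by F. Conversely, the local permutation at v only depends on the values on the
  star of v, so U(F') is closed.

  For density, suppose g \<in> G(F) maps the colour of some edge out of its F-orbit. At the far end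
  of the edge the local permutation moves one colour out of its orbit, hence (counting within
  orbits) also another one, giving a new such edge pointing away. This yields an infinite
  non-backtracking path of vertices where the local permutation of g lies outside F, which is
  impossible. A colour transposition taking a to b at every vertex can thus be approximated by G(F)
  only if some element of F maps a to b.\<close>

lemma nonbacktracking_walk_infinite_range:
  fixes x :: "nat \<Rightarrow> 'v"
  assumes no_cycle: "\<not> (\<exists>xs. reduced_walk adj xs \<and> length xs \<ge> 2 \<and> hd xs = last xs)"
    and step: "\<And>n. adj (x n) (x (Suc n))" and no_backtrack: "\<And>n. x (Suc (Suc n)) \<noteq> x n"
  shows "infinite (range x)"
proof
  assume "finite (range x)"
  then have "\<not> inj x" using finite_imageD[of x UNIV] by auto
  then obtain i j where "i \<noteq> j" "x i = x j" unfolding inj_def by blast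
  then obtain i j where ij: "i < j" "x i = x j" by (metis linorder_neq_iff)
  define xs where "xs = map (\<lambda>k. x (i + k)) [0..<Suc (j - i)]"
  have len: "length xs = Suc (j - i)" by (simp add: xs_def)
  have nth: "k < Suc (j - i) \<Longrightarrow> xs ! k = x (i + k)" for k by (simp add: xs_def del: upt_Suc)
  have "reduced_walk adj xs"
    unfolding reduced_walk_def
  proof (intro conjI allI impI)
    fix k assume "Suc k < length xs"
    then show "adj (xs ! k) (xs ! Suc k)" using step[of "i + k"] by (simp add: len nth)
  next
    fix k assume "Suc (Suc k) < length xs"
    then show "xs ! k \<noteq> xs ! Suc (Suc k)" using no_backtrack[of "i + k"] by (simp add: len nth)
  qed
  moreover have "length xs \<ge> 2" using len ij by simp
  moreover have "hd xs = last xs" using ij by (simp add: xs_def hd_map last_map)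
  ultimately show False using no_cycle by blast
qed

lemma openin_perm_topology: "openin (perm_topology adj) = perm_open adj"
  by (simp add: perm_topology_def istopology_perm_open)

lemma topspace_perm_topology: "topspace (perm_topology adj) = Aut adj"
proof -
  have "perm_open adj (Aut adj)" unfolding perm_open_def by (auto intro: exI[of _ "{}"])
  then have "\<Union> (Collect (perm_open adj)) = Aut adj"
    by (intro subset_antisym Union_least Union_upper) (simp_all add: perm_open_def)
  then show ?thesis
    unfolding topspace_def openin_perm_topology .
qed

lemma openin_perm_topology_agree:
  assumes "finite S"
  shows "openin (perm_topology adj) {h \<in> Aut adj. \<forall>x\<in>S. h x = g x}"
  unfolding openin_perm_topology perm_open_def
proof (intro conjI ballI)
  fix g' assume "g' \<in> {h \<in> Aut adj. \<forall>x\<in>S. h x = g x}"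
  then have "{h \<in> Aut adj. \<forall>x\<in>S. h x = g' x} \<subseteq> {h \<in> Aut adj. \<forall>x\<in>S. h x = g x}"
    by auto
  then show "\<exists>T. finite T \<and> {h \<in> Aut adj. \<forall>x\<in>T. h x = g' x} \<subseteq> {h \<in> Aut adj. \<forall>x\<in>S. h x = g x}"
    using assms by blast
qed auto

lemma in_closure_perm_topology:
  assumes "A \<subseteq> Aut adj"
  shows "g \<in> perm_topology adj closure_of A \<longleftrightarrow>
           g \<in> Aut adj \<and> (\<forall>S. finite S \<longrightarrow> (\<exists>h\<in>A. \<forall>x\<in>S. h x = g x))"
proof (cases "g \<in> Aut adj")
  case g: True
  have "(\<forall>T. g \<in> T \<and> openin (perm_topology adj) T \<longrightarrow> (\<exists>h. h \<in> A \<and> h \<in> T)) \<longleftrightarrow>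
          (\<forall>S. finite S \<longrightarrow> (\<exists>h\<in>A. \<forall>x\<in>S. h x = g x))"
  proof (intro iffI allI impI)
    fix S :: "'a set"
    assume closure: "\<forall>T. g \<in> T \<and> openin (perm_topology adj) T \<longrightarrow> (\<exists>h. h \<in> A \<and> h \<in> T)"
      and "finite S"
    then have "\<exists>h. h \<in> A \<and> h \<in> {h \<in> Aut adj. \<forall>x\<in>S. h x = g x}"
      by (intro closure[rule_format]) (simp add: g openin_perm_topology_agree)
    then show "\<exists>h\<in>A. \<forall>x\<in>S. h x = g x" by blast
  next
    fix T assume agree: "\<forall>S. finite S \<longrightarrow> (\<exists>h\<in>A. \<forall>x\<in>S. h x = g x)"
      and T: "g \<in> T \<and> openin (perm_topology adj) T"
    then obtain S where "finite S" "{h \<in> Aut adj. \<forall>x\<in>S. h x = g x} \<subseteq> T"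
      unfolding openin_perm_topology perm_open_def by blast
    moreover obtain h where "h \<in> A" "\<forall>x\<in>S. h x = g x"
      using agree \<open>finite S\<close> by blast
    ultimately show "\<exists>h. h \<in> A \<and> h \<in> T"
      using assms by blast
  qed
  then show ?thesis using g by (simp add: in_closure_of topspace_perm_topology)
qed (simp add: in_closure_of topspace_perm_topology)

context
  fixes \<Omega> :: "'c set" and F :: "('c \<Rightarrow> 'c) set"
  assumes F: "subgroup F (BijGroup \<Omega>)"
begin

lemma subgroup_BijGroup_subset_Bij: "F \<subseteq> Bij \<Omega>"
  using subgroup.subset[OF F] by (simp add: BijGroup_def)

lemma subgroup_BijGroup_id: "(\<lambda>x\<in>\<Omega>. x) \<in> F"
  using subgroup.one_closed[OF F] by (simp add: BijGroup_def)

lemma subgroup_BijGroup_apply_closed: "f \<in> F \<Longrightarrow> a \<in> \<Omega> \<Longrightarrow> f a \<in> \<Omega>"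
  using subgroup_BijGroup_subset_Bij by (auto simp: Bij_def dest: bij_betw_apply)

lemma subgroup_BijGroup_comp:
  assumes f: "f \<in> F" and h: "h \<in> F" and a: "a \<in> \<Omega>"
  shows "\<exists>k\<in>F. k a = h (f a)"
proof
  show "h \<otimes>\<^bsub>BijGroup \<Omega>\<^esub> f \<in> F" using subgroup.m_closed[OF F h f] .
  have "h \<otimes>\<^bsub>BijGroup \<Omega>\<^esub> f = compose \<Omega> h f"
    using f h subgroup_BijGroup_subset_Bij by (auto simp: BijGroup_def)
  then show "(h \<otimes>\<^bsub>BijGroup \<Omega>\<^esub> f) a = h (f a)" using a by (simp add: compose_def)
qed

lemma subgroup_BijGroup_inv:
  assumes f: "f \<in> F" and a: "a \<in> \<Omega>"
  shows "\<exists>h\<in>F. h (f a) = a"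
proof
  show "inv\<^bsub>BijGroup \<Omega>\<^esub> f \<in> F" using subgroup.m_inv_closed[OF F f] .
  have fB: "f \<in> Bij \<Omega>" using f subgroup_BijGroup_subset_Bij by blast
  then have "inv_into \<Omega> f (f a) = a" using a by (auto simp: Bij_def bij_betw_def)
  then show "(inv\<^bsub>BijGroup \<Omega>\<^esub> f) (f a) = a"
    using fB inv_BijGroup[OF fB] subgroup_BijGroup_apply_closed[OF f a] by simp
qed

text \<open>Otherwise \<sigma> would map the F-orbit of \<sigma> a0 together with a0 injectively into that orbit.\<close>

lemma Bij_moves_another_point_off_orbit:
  assumes fin: "finite \<Omega>" and \<sigma>: "\<sigma> \<in> Bij \<Omega>" and a0: "a0 \<in> \<Omega>"
    and off: "\<not> (\<exists>f\<in>F. f a0 = \<sigma> a0)"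
  shows "\<exists>a\<in>\<Omega>. a \<noteq> a0 \<and> \<not> (\<exists>f\<in>F. f a = \<sigma> a)"
proof (rule ccontr)
  assume on_orbit: "\<not> ?thesis"
  have \<sigma>_mem: "\<sigma> a \<in> \<Omega>" if "a \<in> \<Omega>" for a
    using \<sigma> that by (auto simp: Bij_def dest: bij_betw_apply)
  define Orb where "Orb = {b \<in> \<Omega>. \<exists>f\<in>F. f (\<sigma> a0) = b}"
  have a0_Orb: "a0 \<notin> Orb"
  proof
    assume "a0 \<in> Orb"
    then obtain f where f: "f \<in> F" "f (\<sigma> a0) = a0" by (auto simp: Orb_def)
    then obtain h where "h \<in> F" "h (f (\<sigma> a0)) = \<sigma> a0"
      using subgroup_BijGroup_inv[OF f(1) \<sigma>_mem[OF a0]] by blast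
    then show False using off f by auto
  qed
  have "\<sigma> ` insert a0 Orb \<subseteq> Orb"
  proof (rule image_subsetI)
    fix a assume a: "a \<in> insert a0 Orb"
    show "\<sigma> a \<in> Orb"
    proof (cases "a = a0")
      case True
      then show ?thesis
        using subgroup_BijGroup_id \<sigma>_mem[OF a0] by (auto simp: Orb_def intro!: bexI[of _ "\<lambda>x\<in>\<Omega>. x"])
    next
      case False
      then obtain f where f: "f \<in> F" "f (\<sigma> a0) = a" "a \<in> \<Omega>" using a by (auto simp: Orb_def)
      obtain f' where f': "f' \<in> F" "f' a = \<sigma> a" using on_orbit False f(3) by blast
      obtain k where "k \<in> F" "k (\<sigma> a0) = f' (f (\<sigma> a0))"
        using subgroup_BijGroup_comp[OF f(1) f'(1) \<sigma>_mem[OF a0]] by blast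
      then show ?thesis using f f' \<sigma>_mem by (auto simp: Orb_def)
    qed
  qed
  moreover have "inj_on \<sigma> (insert a0 Orb)"
  proof (rule inj_on_subset)
    show "inj_on \<sigma> \<Omega>" using \<sigma> by (simp add: Bij_def bij_betw_def)
    show "insert a0 Orb \<subseteq> \<Omega>" using a0 by (auto simp: Orb_def)
  qed
  ultimately have "card (insert a0 Orb) \<le> card Orb"
    using fin card_inj_on_le[of \<sigma> "insert a0 Orb" Orb] by (simp add: Orb_def)
  then show False using a0_Orb fin by (simp add: Orb_def)
qed

end

lemma hat_orbit:
  assumes p: "p \<in> hat \<Omega> F" and id: "(\<lambda>x\<in>\<Omega>. x) \<in> F" and a: "a \<in> \<Omega>"
  shows "\<exists>f\<in>F. f a = p a"
proof -
  let ?Orb = "{f a | f. f \<in> F}"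
  have "?Orb \<in> orbits \<Omega> F" using a by (auto simp: orbits_def)
  then have "p ` ?Orb = ?Orb" using p by (simp add: hat_def)
  moreover have "a \<in> ?Orb" using id a by (intro CollectI exI[of _ "\<lambda>x\<in>\<Omega>. x"]) simp
  ultimately have "p a \<in> ?Orb" by blast
  then show ?thesis by force
qed

lemma hat_eq_Bij_if_transitive:
  assumes tr: "transitive_on \<Omega> F" and FB: "F \<subseteq> Bij \<Omega>"
  shows "hat \<Omega> F = Bij \<Omega>"
proof -
  have "Orb = \<Omega>" if Orb: "Orb \<in> orbits \<Omega> F" for Orb
  proof -
    obtain a where a: "a \<in> \<Omega>" "Orb = {f a | f. f \<in> F}"
      using Orb unfolding orbits_def by blast
    show ?thesis
    proof (intro equalityI subsetI)
      fix b assume "b \<in> Orb"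
      then obtain f where "f \<in> F" "b = f a" using a by blast
      then show "b \<in> \<Omega>" using FB a(1) by (auto simp: Bij_def dest: bij_betw_apply)
    next
      fix b assume "b \<in> \<Omega>"
      then obtain f where "f \<in> F" "f a = b" using tr a unfolding transitive_on_def by blast
      then show "b \<in> Orb" using a by blast
    qed
  qed
  then show ?thesis by (auto simp: hat_def Bij_def bij_betw_def)
qed

lemma successively_neq_rev [simp]: "successively (\<noteq>) (rev xs) = successively (\<noteq>) xs"
proof -
  have "(\<lambda>x y. y \<noteq> x) = ((\<noteq>) :: 'a \<Rightarrow> 'a \<Rightarrow> bool)" by (auto simp: fun_eq_iff)
  then show ?thesis unfolding successively_rev by (rule arg_cong)
qed

section \<open>Addresses of vertices\<close>

locale colored_tree =
  fixes \<Omega> :: "'c set" and d :: nat and adj :: "'v \<Rightarrow> 'v \<Rightarrow> bool" and c :: "'v \<Rightarrow> 'v \<Rightarrow> 'c"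
  assumes colored_regular_tree: "colored_regular_tree \<Omega> d adj c"
begin

abbreviation "nb \<equiv> nbr adj c"

lemma finite_colours: "finite \<Omega>"
  using colored_regular_tree by (simp add: colored_regular_tree_def)

lemma adj_sym: "adj u v \<Longrightarrow> adj v u"
  using colored_regular_tree by (auto simp: colored_regular_tree_def is_tree_def)

lemma adj_connected: "adj\<^sup>*\<^sup>* u v"
  using colored_regular_tree by (auto simp: colored_regular_tree_def is_tree_def)

lemma no_reduced_cycle: "\<not> (\<exists>xs. reduced_walk adj xs \<and> length xs \<ge> 2 \<and> hd xs = last xs)"
  using colored_regular_tree by (auto simp: colored_regular_tree_def is_tree_def)

lemma c_sym: "adj u v \<Longrightarrow> c u v = c v u"
  using colored_regular_tree by (auto simp: colored_regular_tree_def)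

lemma bij_betw_c: "bij_betw (c v) {w. adj v w} \<Omega>"
  using colored_regular_tree by (auto simp: colored_regular_tree_def)

lemma c_mem: "adj v w \<Longrightarrow> c v w \<in> \<Omega>"
  using bij_betw_c[of v] by (auto dest: bij_betw_apply)

lemma nbr_c: assumes "adj v w" shows "nb v (c v w) = w"
proof -
  have "w' = w" if "adj v w'" "c v w' = c v w" for w'
    using bij_betw_c[of v] assms that unfolding bij_betw_def inj_on_def by auto
  then show ?thesis unfolding nbr_def using assms by (intro the_equality) auto
qed

lemma adj_nbr_c_nbr:
  assumes "a \<in> \<Omega>" shows "adj v (nb v a)" and "c v (nb v a) = a"
proof -
  obtain w where w: "adj v w" "c v w = a"
    using assms bij_betw_c[of v] unfolding bij_betw_def by force
  then show "adj v (nb v a)" "c v (nb v a) = a" using nbr_c[OF w(1)] by simp_all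
qed

lemma nbr_nbr: "a \<in> \<Omega> \<Longrightarrow> nb (nb v a) a = v"
  using adj_nbr_c_nbr[of a v] nbr_c[of "nb v a" v] adj_sym c_sym by metis

lemma nbr_inj: "a \<in> \<Omega> \<Longrightarrow> b \<in> \<Omega> \<Longrightarrow> nb v a = nb v b \<Longrightarrow> a = b"
  using adj_nbr_c_nbr(2) by metis

definition reduced_word :: "'c list \<Rightarrow> bool" where
  "reduced_word w \<longleftrightarrow> set w \<subseteq> \<Omega> \<and> successively (\<noteq>) w"

definition follow :: "'v \<Rightarrow> 'c list \<Rightarrow> 'v" where
  "follow r w = foldl nb r w"

lemma follow_Nil [simp]: "follow r [] = r"
  by (simp add: follow_def)

lemma follow_Cons [simp]: "follow r (a # w) = follow (nb r a) w"
  by (simp add: follow_def)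

lemma follow_append [simp]: "follow r (u @ v) = follow (follow r u) v"
  by (simp add: follow_def)

lemma follow_rev: "set w \<subseteq> \<Omega> \<Longrightarrow> follow (follow r w) (rev w) = r"
  by (induction w arbitrary: r) (auto simp: nbr_nbr)

lemma reduced_word_Nil [simp]: "reduced_word []"
  by (simp add: reduced_word_def)

lemma reduced_word_Cons: "reduced_word (a # w) \<Longrightarrow> reduced_word w"
  by (auto simp: reduced_word_def successively_Cons)

lemma reduced_word_snoc_iff:
  "reduced_word (w @ [a]) \<longleftrightarrow> reduced_word w \<and> a \<in> \<Omega> \<and> (w \<noteq> [] \<longrightarrow> last w \<noteq> a)"
  by (auto simp: reduced_word_def successively_append_iff)

definition visited :: "'v \<Rightarrow> 'c list \<Rightarrow> 'v list" where
  "visited r w = map (\<lambda>k. follow r (take k w)) [0..<Suc (length w)]"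

lemma reduced_walk_visited:
  assumes w: "reduced_word w"
  shows "reduced_walk adj (visited r w)"
  unfolding reduced_walk_def
proof (intro conjI allI impI)
  fix k assume "Suc k < length (visited r w)"
  then have k: "k < length w" by (simp add: visited_def)
  have "take (Suc k) w = take k w @ [w ! k]" using k by (simp add: take_Suc_conv_app_nth)
  moreover have "w ! k \<in> \<Omega>" using w k by (auto simp: reduced_word_def)
  ultimately show "adj (visited r w ! k) (visited r w ! Suc k)"
    using k adj_nbr_c_nbr by (simp add: visited_def nth_append del: upt_Suc)
next
  fix k assume "Suc (Suc k) < length (visited r w)"
  then have k: "Suc k < length w" by (simp add: visited_def)
  have take1: "take (Suc k) w = take k w @ [w ! k]"
    and take2: "take (Suc (Suc k)) w = take (Suc k) w @ [w ! Suc k]"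
    using k by (simp_all add: take_Suc_conv_app_nth)
  have mem: "w ! k \<in> \<Omega>" "w ! Suc k \<in> \<Omega>" using w k by (auto simp: reduced_word_def)
  have neq: "w ! k \<noteq> w ! Suc k" using w k successively_nth by (auto simp: reduced_word_def)
  let ?y = "follow r (take (Suc k) w)"
  have "follow r (take k w) = nb ?y (w ! k)" using take1 nbr_nbr[OF mem(1)] by simp
  moreover have "follow r (take (Suc (Suc k)) w) = nb ?y (w ! Suc k)" using take2 by simp
  ultimately have "follow r (take k w) \<noteq> follow r (take (Suc (Suc k)) w)"
    using nbr_inj[OF mem] neq by metis
  then show "visited r w ! k \<noteq> visited r w ! Suc (Suc k)"
    using k by (simp add: visited_def del: upt_Suc)
qed

lemma follow_reduced_not_closed:
  assumes u: "reduced_word u" "u \<noteq> []"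
  shows "follow x u \<noteq> x"
proof
  assume closed: "follow x u = x"
  have len: "length (visited x u) = Suc (length u)" by (simp add: visited_def)
  have nth: "k \<le> length u \<Longrightarrow> visited x u ! k = follow x (take k u)" for k
    by (simp add: visited_def del: upt_Suc)
  have ne: "visited x u \<noteq> []" using len by auto
  have "length (visited x u) \<ge> 2" using len u(2) by (cases u) auto
  moreover have "hd (visited x u) = last (visited x u)"
    using ne nth[of 0] nth[of "length u"] closed len by (simp add: hd_conv_nth last_conv_nth)
  ultimately show False using no_reduced_cycle reduced_walk_visited[OF u(1)] by blast
qed

lemma follow_inj:
  "reduced_word w1 \<Longrightarrow> reduced_word w2 \<Longrightarrow> follow r w1 = follow r w2 \<Longrightarrow> w1 = w2"
proof (induction w1 arbitrary: r w2)
  case Nil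
  then show ?case using follow_reduced_not_closed[of w2 r] by force
next
  case (Cons a w1)
  show ?case
  proof (cases w2)
    case Nil
    then show ?thesis using Cons.prems follow_reduced_not_closed[of "a # w1" r] by simp
  next
    case w2: (Cons b w2')
    show ?thesis
    proof (cases "a = b")
      case True
      then show ?thesis using Cons.IH[of w2' "nb r a"] Cons.prems w2 reduced_word_Cons by auto
    next
      case False
      let ?x = "follow r (a # w1)"
      let ?u = "rev (a # w1) @ (b # w2')"
      have set_aw: "set (a # w1) \<subseteq> \<Omega>" using Cons.prems(1) by (simp add: reduced_word_def)
      have "follow ?x ?u = follow r (b # w2')" using follow_rev[OF set_aw, of r] by simp
      also have "\<dots> = ?x" using Cons.prems w2 by simp
      finally have closed: "follow ?x ?u = ?x" .
      have "successively (\<noteq>) (rev (a # w1))"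
        using Cons.prems(1) by (simp only: successively_neq_rev reduced_word_def)
      then have "reduced_word ?u"
        using Cons.prems w2 set_aw False unfolding reduced_word_def successively_append_iff
        by auto
      then show ?thesis using follow_reduced_not_closed closed by blast
    qed
  qed
qed

lemma ex_reduced_word_follow: "\<exists>w. reduced_word w \<and> follow r w = x"
  using adj_connected[of r x]
proof (induction rule: rtranclp_induct)
  case base
  show ?case by (rule exI[of _ "[]"]) simp
next
  case (step y z)
  then obtain w where w: "reduced_word w" "follow r w = y" by blast
  let ?a = "c y z"
  have a: "?a \<in> \<Omega>" "z = nb y ?a" using step(2) c_mem nbr_c by auto
  show ?case
  proof (cases "w \<noteq> [] \<and> last w = ?a")
    case True
    then obtain w' where w': "w = w' @ [?a]" by (metis append_butlast_last_id)
    have "reduced_word w'" using w(1) w' reduced_word_snoc_iff by auto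
    moreover have "follow r w' = z"
    proof -
      have "y = nb (follow r w') ?a" using w(2) w' by simp
      then show ?thesis using a nbr_nbr by metis
    qed
    ultimately show ?thesis by blast
  next
    case False
    then have "reduced_word (w @ [?a])" using w(1) a reduced_word_snoc_iff by auto
    moreover have "follow r (w @ [?a]) = z" using w(2) a by simp
    ultimately show ?thesis by blast
  qed
qed

definition address :: "'v \<Rightarrow> 'v \<Rightarrow> 'c list" where
  "address r x = (THE w. reduced_word w \<and> follow r w = x)"

lemma reduced_word_address: "reduced_word (address r x)"
  and follow_address: "follow r (address r x) = x"
proof -
  have "\<exists>!w. reduced_word w \<and> follow r w = x"
    using ex_reduced_word_follow follow_inj by metis
  then have "reduced_word (address r x) \<and> follow r (address r x) = x"
    unfolding address_def by (rule theI')
  then show "reduced_word (address r x)" "follow r (address r x) = x" by simp_all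
qed

lemma address_follow: "reduced_word w \<Longrightarrow> address r (follow r w) = w"
  using reduced_word_address follow_address follow_inj by metis

lemma address_root: "address r r = []"
  using address_follow[of "[]" r] by simp

lemma adj_iff_address:
  "adj x y \<longleftrightarrow> (\<exists>a. address r y = address r x @ [a]) \<or> (\<exists>a. address r x = address r y @ [a])"
proof
  assume xy: "adj x y"
  let ?w = "address r x" and ?a = "c x y"
  have a: "?a \<in> \<Omega>" "y = nb x ?a" using xy c_mem nbr_c by auto
  show "(\<exists>a. address r y = ?w @ [a]) \<or> (\<exists>a. ?w = address r y @ [a])"
  proof (cases "?w \<noteq> [] \<and> last ?w = ?a")
    case True
    then obtain w' where w': "?w = w' @ [?a]" by (metis append_butlast_last_id)
    have "reduced_word w'" using reduced_word_address[of r x] w' reduced_word_snoc_iff by auto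
    moreover have "follow r w' = y" using follow_address[of r x] w' a nbr_nbr by (metis follow_append follow_Cons follow_Nil)
    ultimately show ?thesis using w' address_follow by metis
  next
    case False
    then have "reduced_word (?w @ [?a])" using reduced_word_address[of r x] a reduced_word_snoc_iff by auto
    moreover have "follow r (?w @ [?a]) = y" using follow_address[of r x] a by simp
    ultimately show ?thesis using address_follow by metis
  qed
next
  have child: "adj x y" if xy: "address r y = address r x @ [a]" for x y a
  proof -
    have "a \<in> \<Omega>" using reduced_word_address[of r y] xy reduced_word_snoc_iff by simp
    moreover have "y = nb x a" using follow_address[of r y] follow_address[of r x] xy by simp
    ultimately show ?thesis using adj_nbr_c_nbr by auto
  qed
  assume "(\<exists>a. address r y = address r x @ [a]) \<or> (\<exists>a. address r x = address r y @ [a])"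
  then show "adj x y" using child adj_sym by blast
qed

section \<open>Automorphisms with prescribed local permutations\<close>

definition relabel :: "('c list \<Rightarrow> 'c \<Rightarrow> 'c) \<Rightarrow> 'c list \<Rightarrow> 'c list" where
  "relabel \<pi> w = map (\<lambda>k. \<pi> (take k w) (w ! k)) [0..<length w]"

lemma relabel_Nil [simp]: "relabel \<pi> [] = []"
  by (simp add: relabel_def)

lemma length_relabel [simp]: "length (relabel \<pi> w) = length w"
  by (simp add: relabel_def)

lemma relabel_snoc [simp]: "relabel \<pi> (w @ [a]) = relabel \<pi> w @ [\<pi> w a]"
  by (simp add: relabel_def nth_append)

text \<open>A portrait \<pi> prescribes the local permutation \<pi> w at the vertex with address w; the
  second assumption says that the prescriptions at the two ends of an edge move the colour of
  that edge in the same way.\<close>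

context
  fixes \<pi> :: "'c list \<Rightarrow> 'c \<Rightarrow> 'c"
  assumes portrait_bij: "\<And>w. reduced_word w \<Longrightarrow> bij_betw (\<pi> w) \<Omega> \<Omega>"
    and portrait_compat: "\<And>w a. reduced_word (w @ [a]) \<Longrightarrow> \<pi> (w @ [a]) a = \<pi> w a"
begin

lemma portrait_mem: "reduced_word w \<Longrightarrow> a \<in> \<Omega> \<Longrightarrow> \<pi> w a \<in> \<Omega>"
  using portrait_bij bij_betw_apply by metis

lemma portrait_inj: "reduced_word w \<Longrightarrow> a \<in> \<Omega> \<Longrightarrow> b \<in> \<Omega> \<Longrightarrow> \<pi> w a = \<pi> w b \<Longrightarrow> a = b"
  using portrait_bij unfolding bij_betw_def inj_on_def by metis

lemma last_relabel: "reduced_word w \<Longrightarrow> w \<noteq> [] \<Longrightarrow> last (relabel \<pi> w) = \<pi> w (last w)"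
  by (metis append_butlast_last_id last_snoc portrait_compat relabel_snoc)

lemma reduced_word_relabel: "reduced_word w \<Longrightarrow> reduced_word (relabel \<pi> w)"
proof (induction w rule: rev_induct)
  case (snoc a w)
  have w: "reduced_word w" "a \<in> \<Omega>" "w \<noteq> [] \<longrightarrow> last w \<noteq> a"
    using snoc.prems reduced_word_snoc_iff by auto
  have "last (relabel \<pi> w) \<noteq> \<pi> w a" if "relabel \<pi> w \<noteq> []"
  proof -
    have ne: "w \<noteq> []" using that by auto
    then have "last w \<in> \<Omega>" using w(1) by (auto simp: reduced_word_def)
    then show ?thesis using last_relabel[OF w(1) ne] portrait_inj[OF w(1)] w(2,3) ne by metis
  qed
  then show ?case using snoc.IH w portrait_mem reduced_word_snoc_iff by simp
qed simp

lemma relabel_inj: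
  "reduced_word w1 \<Longrightarrow> reduced_word w2 \<Longrightarrow> relabel \<pi> w1 = relabel \<pi> w2 \<Longrightarrow> w1 = w2"
proof (induction w1 arbitrary: w2 rule: rev_induct)
  case Nil
  then show ?case by (metis length_0_conv length_relabel)
next
  case (snoc a w1)
  have "w2 \<noteq> []" using snoc.prems(3) by (metis length_0_conv length_relabel snoc_eq_iff_butlast)
  then obtain w2' b where w2: "w2 = w2' @ [b]" by (metis append_butlast_last_id)
  have red: "reduced_word w1" "a \<in> \<Omega>" "reduced_word w2'" "b \<in> \<Omega>"
    using snoc.prems w2 reduced_word_snoc_iff by auto
  have "relabel \<pi> w1 = relabel \<pi> w2'" "\<pi> w1 a = \<pi> w2' b" using snoc.prems(3) w2 by auto
  then have "w1 = w2'" "a = b" using snoc.IH red portrait_inj by auto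
  then show ?case using w2 by simp
qed

lemma relabel_surj: "reduced_word v \<Longrightarrow> \<exists>w. reduced_word w \<and> relabel \<pi> w = v"
proof (induction v rule: rev_induct)
  case Nil
  show ?case by (intro exI[of _ "[]"]) simp
next
  case (snoc b v)
  have v: "reduced_word v" "b \<in> \<Omega>" "v \<noteq> [] \<longrightarrow> last v \<noteq> b"
    using snoc.prems reduced_word_snoc_iff by auto
  obtain w where w: "reduced_word w" "relabel \<pi> w = v" using snoc.IH v by blast
  obtain a where a: "a \<in> \<Omega>" "\<pi> w a = b"
    using portrait_bij[OF w(1)] v(2) unfolding bij_betw_def by force
  have "last w \<noteq> a" if ne: "w \<noteq> []"
  proof
    assume "last w = a"
    then have "last v = b" using last_relabel[OF w(1) ne] w(2) a(2) by simp
    moreover have "v \<noteq> []" using ne w(2) by (metis length_0_conv length_relabel)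
    ultimately show False using v(3) by simp
  qed
  then have "reduced_word (w @ [a])" using w a reduced_word_snoc_iff by auto
  moreover have "relabel \<pi> (w @ [a]) = v @ [b]" using w a by simp
  ultimately show ?case by blast
qed

lemma relabel_child_iff:
  assumes u: "reduced_word u" and v: "reduced_word v"
  shows "(\<exists>a. v = u @ [a]) \<longleftrightarrow> (\<exists>b. relabel \<pi> v = relabel \<pi> u @ [b])"
proof
  assume "\<exists>b. relabel \<pi> v = relabel \<pi> u @ [b]"
  then obtain b where b: "relabel \<pi> v = relabel \<pi> u @ [b]" by blast
  then have "v \<noteq> []" by (metis length_0_conv length_relabel snoc_eq_iff_butlast)
  then obtain v' a where v': "v = v' @ [a]" by (metis append_butlast_last_id)
  have "reduced_word v'" using v v' reduced_word_snoc_iff by auto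
  moreover have "relabel \<pi> v' = relabel \<pi> u" using b v' by simp
  ultimately have "v' = u" using relabel_inj u by blast
  then show "\<exists>a. v = u @ [a]" using v' by blast
qed auto

definition aut_of_portrait :: "'v \<Rightarrow> 'v \<Rightarrow> 'v \<Rightarrow> 'v" where
  "aut_of_portrait r r' x = follow r' (relabel \<pi> (address r x))"

lemma aut_of_portrait_follow:
  "reduced_word w \<Longrightarrow> aut_of_portrait r r' (follow r w) = follow r' (relabel \<pi> w)"
  by (simp add: aut_of_portrait_def address_follow)

lemma address_aut_of_portrait: "address r' (aut_of_portrait r r' x) = relabel \<pi> (address r x)"
  unfolding aut_of_portrait_def by (simp add: address_follow reduced_word_relabel reduced_word_address)

lemma aut_of_portrait_root: "aut_of_portrait r r' r = r'"
  by (simp add: aut_of_portrait_def address_root)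

lemma aut_of_portrait_Aut: "aut_of_portrait r r' \<in> Aut adj"
  unfolding Aut_def
proof (intro CollectI conjI allI)
  show "bij (aut_of_portrait r r')"
  proof (rule bijI)
    show "inj (aut_of_portrait r r')"
    proof (rule injI)
      fix x y assume "aut_of_portrait r r' x = aut_of_portrait r r' y"
      then have "relabel \<pi> (address r x) = relabel \<pi> (address r y)"
        using address_aut_of_portrait by metis
      then have "address r x = address r y" using relabel_inj reduced_word_address by blast
      then show "x = y" using follow_address by metis
    qed
    have "z \<in> range (aut_of_portrait r r')" for z
    proof -
      obtain w where w: "reduced_word w" "relabel \<pi> w = address r' z"
        using relabel_surj reduced_word_address by blast
      have "aut_of_portrait r r' (follow r w) = z"
        using aut_of_portrait_follow[OF w(1)] w(2) follow_address by simp
      then show ?thesis by blast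
    qed
    then show "surj (aut_of_portrait r r')" by blast
  qed
  fix x y
  show "adj x y \<longleftrightarrow> adj (aut_of_portrait r r' x) (aut_of_portrait r r' y)"
    using adj_iff_address[of x y r] adj_iff_address[of "aut_of_portrait r r' x" "aut_of_portrait r r' y" r']
      address_aut_of_portrait reduced_word_address
      relabel_child_iff[of "address r x" "address r y"] relabel_child_iff[of "address r y" "address r x"]
    by metis
qed

lemma local_perm_aut_of_portrait:
  assumes w: "reduced_word w"
  shows "local_perm \<Omega> adj c (aut_of_portrait r r') (follow r w) = restrict (\<pi> w) \<Omega>"
proof (rule ext)
  fix a
  let ?x = "follow r w" and ?h = "aut_of_portrait r r'"
  show "local_perm \<Omega> adj c ?h ?x a = restrict (\<pi> w) \<Omega> a"
  proof (cases "a \<in> \<Omega>")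
    case a: True
    show ?thesis
    proof (cases "w \<noteq> [] \<and> last w = a")
      case True
      \<comment> \<open>the colour a leads back to the parent, where compatibility applies\<close>
      then obtain w' where w': "w = w' @ [a]" by (metis append_butlast_last_id)
      have red': "reduced_word w'" using w w' reduced_word_snoc_iff by auto
      let ?z = "follow r' (relabel \<pi> w')"
      have "nb ?x a = follow r w'" using w' a nbr_nbr by simp
      then have "?h (nb ?x a) = ?z" using aut_of_portrait_follow[OF red'] by simp
      moreover have "?h ?x = nb ?z (\<pi> w' a)" using aut_of_portrait_follow[OF w] w' by simp
      moreover have "c (nb ?z (\<pi> w' a)) ?z = \<pi> w' a"
        using adj_nbr_c_nbr[OF portrait_mem[OF red' a], of ?z] c_sym by metis
      moreover have "\<pi> w a = \<pi> w' a" using portrait_compat w w' by simp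
      ultimately show ?thesis using a by (simp add: local_perm_def)
    next
      case False
      then have red_wa: "reduced_word (w @ [a])" using w a reduced_word_snoc_iff by auto
      have "?h (nb ?x a) = nb (?h ?x) (\<pi> w a)"
        using aut_of_portrait_follow[OF red_wa] aut_of_portrait_follow[OF w] by simp
      then show ?thesis using a adj_nbr_c_nbr(2)[OF portrait_mem[OF w a]] by (simp add: local_perm_def)
    qed
  qed (simp add: local_perm_def)
qed

lemma aut_of_portrait_eq_on_ball:
  assumes g: "g \<in> Aut adj"
    and agree: "\<And>u. reduced_word u \<Longrightarrow> length u < n \<Longrightarrow> \<pi> u = local_perm \<Omega> adj c g (follow r u)"
  shows "reduced_word w \<Longrightarrow> length w \<le> n \<Longrightarrow> aut_of_portrait r (g r) (follow r w) = g (follow r w)"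
proof (induction w rule: rev_induct)
  case (snoc a w)
  let ?x = "follow r w"
  have w: "reduced_word w" "a \<in> \<Omega>" using snoc.prems reduced_word_snoc_iff by auto
  have "aut_of_portrait r (g r) (follow r (w @ [a])) = nb (aut_of_portrait r (g r) ?x) (\<pi> w a)"
    using aut_of_portrait_follow[OF snoc.prems(1)] aut_of_portrait_follow[OF w(1)] by simp
  also have "\<dots> = nb (g ?x) (c (g ?x) (g (nb ?x a)))"
    using snoc w agree[OF w(1)] by (simp add: local_perm_def)
  also have "\<dots> = g (nb ?x a)"
    using g adj_nbr_c_nbr(1)[OF w(2)] by (intro nbr_c) (auto simp: Aut_def)
  finally show ?case by simp
qed (simp add: aut_of_portrait_root)

end

lemma local_perm_Bij:
  assumes g: "g \<in> Aut adj"
  shows "local_perm \<Omega> adj c g v \<in> Bij \<Omega>"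
proof -
  let ?f = "\<lambda>a. c (g v) (g (nb v a))"
  have adj_g: "adj (g v) (g (nb v a))" if "a \<in> \<Omega>" for a
    using g adj_nbr_c_nbr(1)[OF that] by (auto simp: Aut_def)
  have "?f ` \<Omega> \<subseteq> \<Omega>" using adj_g c_mem by auto
  moreover have "inj_on ?f \<Omega>"
  proof (rule inj_onI)
    fix a b assume ab: "a \<in> \<Omega>" "b \<in> \<Omega>" "?f a = ?f b"
    then have "g (nb v a) = g (nb v b)"
      using bij_betw_c[of "g v"] adj_g unfolding bij_betw_def inj_on_def by blast
    then have "nb v a = nb v b" using g by (auto simp: Aut_def bij_def inj_def)
    then show "a = b" using nbr_inj ab by blast
  qed
  ultimately have "bij_betw ?f \<Omega> \<Omega>"
    using endo_inj_surj[OF finite_colours] by (simp add: bij_betw_def)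
  then have "bij_betw (local_perm \<Omega> adj c g v) \<Omega> \<Omega>"
    unfolding local_perm_def by (rule bij_betw_cong[THEN iffD1, rotated]) simp
  then show ?thesis by (simp add: Bij_def local_perm_def)
qed

lemma local_perm_follow_snoc:
  assumes g: "g \<in> Aut adj" and w: "reduced_word (w @ [a])"
  shows "local_perm \<Omega> adj c g (follow r (w @ [a])) a = local_perm \<Omega> adj c g (follow r w) a"
proof -
  let ?x = "follow r w"
  have a: "a \<in> \<Omega>" using w reduced_word_snoc_iff by auto
  then have "adj (g ?x) (g (nb ?x a))" using g adj_nbr_c_nbr(1) by (auto simp: Aut_def)
  then have "c (g (nb ?x a)) (g ?x) = c (g ?x) (g (nb ?x a))" using c_sym adj_sym by metis
  then show ?thesis using a nbr_nbr by (simp add: local_perm_def)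
qed

lemma local_perm_cong:
  "\<forall>y\<in>insert v (nb v ` \<Omega>). h y = g y \<Longrightarrow> local_perm \<Omega> adj c h v = local_perm \<Omega> adj c g v"
  unfolding local_perm_def by (intro restrict_ext) auto

section \<open>The closure of G(F,F')\<close>

text \<open>Up to depth N the portrait copies g; deeper down it is taken from F, agreeing with g's
  local permutation at depth N on the one colour that points back to the ball, which is
  possible because F' \<subseteq> hat \<Omega> F.\<close>

lemma ex_portrait_from_F_outside_ball:
  assumes g: "g \<in> U_grp \<Omega> adj c F'" and FF': "F \<subseteq> F'" and F'_hat: "F' \<subseteq> hat \<Omega> F"
    and id: "(\<lambda>x\<in>\<Omega>. x) \<in> F"
  obtains \<pi> where "\<And>w. reduced_word w \<Longrightarrow> \<pi> w \<in> F'"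
    and "\<And>w a. reduced_word (w @ [a]) \<Longrightarrow> \<pi> (w @ [a]) a = \<pi> w a"
    and "\<And>w. length w \<le> N \<Longrightarrow> \<pi> w = local_perm \<Omega> adj c g (follow r w)"
    and "\<And>w. reduced_word w \<Longrightarrow> N < length w \<Longrightarrow> \<pi> w \<in> F"
proof
  let ?lp = "local_perm \<Omega> adj c g"
  have g: "g \<in> Aut adj" "\<And>v. ?lp v \<in> F'" using g by (auto simp: U_grp_def)
  define \<pi> where "\<pi> w = (if length w \<le> N then ?lp (follow r w)
      else (SOME f. f \<in> F \<and> f (w ! N) = ?lp (follow r (take N w)) (w ! N)))" for w
  have deep: "\<pi> w \<in> F \<and> \<pi> w (w ! N) = ?lp (follow r (take N w)) (w ! N)"
    if w: "reduced_word w" "N < length w" for w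
  proof -
    have "w ! N \<in> set w" using w(2) by simp
    then have "w ! N \<in> \<Omega>" using w(1) unfolding reduced_word_def by blast
    then have "\<exists>f\<in>F. f (w ! N) = ?lp (follow r (take N w)) (w ! N)"
      using hat_orbit[OF subsetD[OF F'_hat g(2)] id] by blast
    then show ?thesis using someI_ex[of "\<lambda>f. f \<in> F \<and> f (w ! N) = _"] w by (simp add: \<pi>_def Bex_def)
  qed
  show "\<pi> w \<in> F" if "reduced_word w" "N < length w" for w using deep[OF that] by blast
  show "\<pi> w = ?lp (follow r w)" if "length w \<le> N" for w using that by (simp add: \<pi>_def)
  show "\<pi> w \<in> F'" if "reduced_word w" for w
    using deep[OF that] g(2) FF' by (cases "length w \<le> N") (auto simp: \<pi>_def)
  show "\<pi> (w @ [a]) a = \<pi> w a" if wa: "reduced_word (w @ [a])" for w a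
  proof -
    consider "length w < N" | "length w = N" | "length w > N" by linarith
    then show ?thesis
    proof cases
      case 1
      then show ?thesis using local_perm_follow_snoc[OF g(1) wa] by (simp add: \<pi>_def)
    next
      case 2
      then show ?thesis using deep[OF wa] by (simp add: \<pi>_def nth_append)
    next
      case 3
      then have "take N (w @ [a]) = take N w" "(w @ [a]) ! N = w ! N" by (auto simp: nth_append)
      then show ?thesis using 3 by (simp add: \<pi>_def)
    qed
  qed
qed

lemma U_grp_approx_by_G2_grp:
  assumes g: "g \<in> U_grp \<Omega> adj c F'" and FF': "F \<subseteq> F'" and F'_hat: "F' \<subseteq> hat \<Omega> F"
    and id: "(\<lambda>x\<in>\<Omega>. x) \<in> F" and S: "finite S"
  shows "\<exists>h\<in>G2_grp \<Omega> adj c F F'. \<forall>x\<in>S. h x = g x"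
proof -
  define r where "r = (undefined :: 'v)"
  define N where "N = Max (insert 0 (length ` address r ` S))"
  have N: "length (address r x) \<le> N" if "x \<in> S" for x using S that by (simp add: N_def)
  obtain \<pi> where \<pi>_F': "\<And>w. reduced_word w \<Longrightarrow> \<pi> w \<in> F'"
    and compat: "\<And>w a. reduced_word (w @ [a]) \<Longrightarrow> \<pi> (w @ [a]) a = \<pi> w a"
    and ball: "\<And>w. length w \<le> N \<Longrightarrow> \<pi> w = local_perm \<Omega> adj c g (follow r w)"
    and deep: "\<And>w. reduced_word w \<Longrightarrow> N < length w \<Longrightarrow> \<pi> w \<in> F"
    using ex_portrait_from_F_outside_ball[OF g FF' F'_hat id] by metis
  have F'_Bij: "F' \<subseteq> Bij \<Omega>" using F'_hat by (auto simp: hat_def)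
  have bij: "bij_betw (\<pi> w) \<Omega> \<Omega>" if "reduced_word w" for w
    using \<pi>_F'[OF that] F'_Bij by (auto simp: Bij_def)
  define h where "h = aut_of_portrait \<pi> r (g r)"
  have h_Aut: "h \<in> Aut adj" unfolding h_def using aut_of_portrait_Aut[OF bij compat] .
  have local_perm_h: "local_perm \<Omega> adj c h v = \<pi> (address r v)" for v
  proof -
    have "local_perm \<Omega> adj c h (follow r (address r v)) = restrict (\<pi> (address r v)) \<Omega>"
      unfolding h_def by (rule local_perm_aut_of_portrait[OF bij compat reduced_word_address])
    moreover have "\<pi> (address r v) \<in> extensional \<Omega>"
      using \<pi>_F'[OF reduced_word_address] F'_Bij by (auto simp: Bij_def)
    ultimately show ?thesis by (simp add: follow_address extensional_restrict)
  qed
  have "{v. local_perm \<Omega> adj c h v \<notin> F} \<subseteq> follow r ` {w. set w \<subseteq> \<Omega> \<and> length w \<le> N}"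
  proof
    fix v assume v: "v \<in> {v. local_perm \<Omega> adj c h v \<notin> F}"
    have "\<not> N < length (address r v)"
    proof
      assume "N < length (address r v)"
      then have "\<pi> (address r v) \<in> F" by (rule deep[OF reduced_word_address])
      then show False using v local_perm_h by simp
    qed
    moreover have "set (address r v) \<subseteq> \<Omega>"
      using reduced_word_address[of r v] by (simp add: reduced_word_def)
    ultimately show "v \<in> follow r ` {w. set w \<subseteq> \<Omega> \<and> length w \<le> N}"
      by (intro image_eqI[of v _ "address r v"]) (simp_all add: follow_address)
  qed
  then have "finite {v. local_perm \<Omega> adj c h v \<notin> F}"
    using finite_lists_length_le[OF finite_colours] finite_subset by blast
  moreover have "local_perm \<Omega> adj c h v \<in> F'" for v
    using local_perm_h \<pi>_F' reduced_word_address by simp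
  moreover have "h x = g x" if "x \<in> S" for x
  proof -
    have g_Aut: "g \<in> Aut adj" using g by (simp add: U_grp_def)
    have agree: "\<pi> u = local_perm \<Omega> adj c g (follow r u)" if "length u < N" for u
      using ball that by simp
    have "aut_of_portrait \<pi> r (g r) (follow r (address r x)) = g (follow r (address r x))"
      using aut_of_portrait_eq_on_ball[OF bij compat g_Aut agree reduced_word_address N[OF that]] .
    then show ?thesis by (simp add: h_def follow_address)
  qed
  ultimately show ?thesis using h_Aut by (auto simp: G2_grp_def G_grp_def U_grp_def)
qed

lemma closure_G2_grp:
  assumes FF': "F \<subseteq> F'" and F'_hat: "F' \<subseteq> hat \<Omega> F" and id: "(\<lambda>x\<in>\<Omega>. x) \<in> F"
  shows "perm_topology adj closure_of (G2_grp \<Omega> adj c F F') = U_grp \<Omega> adj c F'"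
proof -
  have G2_Aut: "G2_grp \<Omega> adj c F F' \<subseteq> Aut adj" by (auto simp: G2_grp_def G_grp_def)
  have "g \<in> U_grp \<Omega> adj c F'"
    if "g \<in> Aut adj" and approx: "\<forall>S. finite S \<longrightarrow> (\<exists>h\<in>G2_grp \<Omega> adj c F F'. \<forall>x\<in>S. h x = g x)" for g
  proof -
    have "local_perm \<Omega> adj c g v \<in> F'" for v
    proof -
      obtain h where h: "h \<in> G2_grp \<Omega> adj c F F'" "\<forall>x\<in>insert v (nb v ` \<Omega>). h x = g x"
        using approx finite_colours by (meson finite_imageI finite_insert)
      have "local_perm \<Omega> adj c h v \<in> F'" using h(1) by (simp add: G2_grp_def U_grp_def)
      then show ?thesis using local_perm_cong[OF h(2)] by simp
    qed
    then show ?thesis using that by (simp add: U_grp_def)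
  qed
  moreover have "g \<in> Aut adj" if "g \<in> U_grp \<Omega> adj c F'" for g
    using that by (simp add: U_grp_def)
  ultimately show ?thesis
    unfolding set_eq_iff in_closure_perm_topology[OF G2_Aut]
    using U_grp_approx_by_G2_grp[OF _ FF' F'_hat id] by metis
qed

section \<open>Density of G(F)\<close>

lemma infinite_heads_of_propagating_edges:
  assumes start: "adj x0 y0" "P x0 y0"
    and propagate: "\<And>x y. adj x y \<Longrightarrow> P x y \<Longrightarrow> \<exists>z. adj y z \<and> z \<noteq> x \<and> P y z"
  shows "infinite {y. \<exists>x. adj x y \<and> P x y}"
proof -
  let ?E = "\<lambda>e. adj (fst e) (snd e) \<and> P (fst e) (snd e)"
  have "\<exists>e. \<forall>n. ?E (e n) \<and> fst (e (Suc n)) = snd (e n) \<and> snd (e (Suc n)) \<noteq> fst (e n)"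
  proof (rule dependent_nat_choice)
    show "\<exists>e. ?E e" using start by (intro exI[of _ "(x0, y0)"]) simp
    fix e :: "'v \<times> 'v" and n :: nat assume "?E e"
    then obtain z where "adj (snd e) z" "z \<noteq> fst e" "P (snd e) z" using propagate by blast
    then show "\<exists>e'. ?E e' \<and> fst e' = snd e \<and> snd e' \<noteq> fst e"
      by (intro exI[of _ "(snd e, z)"]) simp
  qed
  then obtain e where e: "\<And>n. ?E (e n)" "\<And>n. fst (e (Suc n)) = snd (e n)"
    "\<And>n. snd (e (Suc n)) \<noteq> fst (e n)" by blast
  define y where "y n = snd (e n)" for n
  have "infinite (range y)"
  proof (rule nonbacktracking_walk_infinite_range[OF no_reduced_cycle])
    fix n
    show "adj (y n) (y (Suc n))" using e(1)[of "Suc n"] e(2)[of n] by (simp add: y_def)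
    show "y (Suc (Suc n)) \<noteq> y n" using e(3)[of "Suc n"] e(2)[of n] by (simp add: y_def)
  qed
  moreover have "range y \<subseteq> {y. \<exists>x. adj x y \<and> P x y}" using e(1) by (auto simp: y_def)
  ultimately show ?thesis by (rule infinite_super[rotated])
qed

definition breaks_orbit :: "('c \<Rightarrow> 'c) set \<Rightarrow> ('v \<Rightarrow> 'v) \<Rightarrow> 'v \<Rightarrow> 'v \<Rightarrow> bool" where
  "breaks_orbit F g x y \<longleftrightarrow> \<not> (\<exists>f\<in>F. f (c x y) = c (g x) (g y))"

lemma local_perm_apply_c:
  assumes g: "g \<in> Aut adj" and xy: "adj x y"
  shows "local_perm \<Omega> adj c g x (c x y) = c (g x) (g y)"
  using c_mem[OF xy] nbr_c[OF xy] by (simp add: local_perm_def)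

lemma breaks_orbit_sym:
  assumes g: "g \<in> Aut adj" and xy: "adj x y"
  shows "breaks_orbit F g y x \<longleftrightarrow> breaks_orbit F g x y"
proof -
  have "adj (g x) (g y)" using g xy by (simp add: Aut_def)
  then show ?thesis using c_sym[OF xy] c_sym[of "g x" "g y"] by (simp add: breaks_orbit_def)
qed

lemma breaks_orbit_local_perm_notin:
  assumes g: "g \<in> Aut adj" and xy: "adj x y" and breaks: "breaks_orbit F g x y"
  shows "local_perm \<Omega> adj c g y \<notin> F"
proof
  assume "local_perm \<Omega> adj c g y \<in> F"
  moreover have "local_perm \<Omega> adj c g y (c y x) = c (g y) (g x)"
    using local_perm_apply_c[OF g adj_sym[OF xy]] .
  ultimately show False
    using breaks breaks_orbit_sym[OF g xy] by (auto simp: breaks_orbit_def)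
qed

lemma breaks_orbit_propagates:
  assumes F: "subgroup F (BijGroup \<Omega>)" and g: "g \<in> Aut adj"
    and xy: "adj x y" and breaks: "breaks_orbit F g x y"
  shows "\<exists>z. adj y z \<and> z \<noteq> x \<and> breaks_orbit F g y z"
proof -
  let ?\<sigma> = "local_perm \<Omega> adj c g y"
  have yx: "adj y x" using adj_sym[OF xy] .
  have "\<not> (\<exists>f\<in>F. f (c y x) = ?\<sigma> (c y x))"
    using breaks breaks_orbit_sym[OF g xy] local_perm_apply_c[OF g yx]
    by (simp add: breaks_orbit_def)
  then obtain a where a: "a \<in> \<Omega>" "a \<noteq> c y x" "\<not> (\<exists>f\<in>F. f a = ?\<sigma> a)"
    using Bij_moves_another_point_off_orbit[OF F finite_colours local_perm_Bij[OF g] c_mem[OF yx]]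
    by blast
  let ?z = "nb y a"
  have z: "adj y ?z" "c y ?z = a" using adj_nbr_c_nbr[OF a(1)] by simp_all
  have "?z \<noteq> x" using a(2) z(2) by auto
  moreover have "breaks_orbit F g y ?z"
    using a(3) z local_perm_apply_c[OF g z(1)] by (simp add: breaks_orbit_def)
  ultimately show ?thesis using z(1) by blast
qed

lemma G_grp_not_breaks_orbit:
  assumes F: "subgroup F (BijGroup \<Omega>)" and g: "g \<in> G_grp \<Omega> adj c F" and xy: "adj x y"
  shows "\<not> breaks_orbit F g x y"
proof
  assume "breaks_orbit F g x y"
  have g_Aut: "g \<in> Aut adj" using g by (simp add: G_grp_def)
  have "infinite {y. \<exists>x. adj x y \<and> breaks_orbit F g x y}"
    using infinite_heads_of_propagating_edges[where P = "breaks_orbit F g", OF xy]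
      \<open>breaks_orbit F g x y\<close> breaks_orbit_propagates[OF F g_Aut] by blast
  moreover have "{y. \<exists>x. adj x y \<and> breaks_orbit F g x y} \<subseteq> {v. local_perm \<Omega> adj c g v \<notin> F}"
    using breaks_orbit_local_perm_notin[OF g_Aut] by blast
  ultimately show False using g finite_subset by (auto simp: G_grp_def)
qed

text \<open>The automorphism with all local permutations equal to the transposition of a and b can
  be approximated by G(F) only if F moves a to b.\<close>

lemma transitive_if_closure_G_grp:
  assumes F: "subgroup F (BijGroup \<Omega>)"
    and dense: "perm_topology adj closure_of (G_grp \<Omega> adj c F) = Aut adj"
  shows "transitive_on \<Omega> F"
  unfolding transitive_on_def
proof (intro ballI)
  fix a b assume a: "a \<in> \<Omega>" and b: "b \<in> \<Omega>"
  define r where "r = (undefined :: 'v)"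
  let ?\<pi> = "\<lambda>_ :: 'c list. Transposition.transpose a b"
  have bij: "bij_betw (?\<pi> w) \<Omega> \<Omega>" for w using a b by simp
  have compat: "?\<pi> (w @ [x]) x = ?\<pi> w x" for w x by simp
  let ?\<alpha> = "aut_of_portrait ?\<pi> r r"
  have \<alpha>_Aut: "?\<alpha> \<in> Aut adj" using aut_of_portrait_Aut[OF bij compat] .
  have "local_perm \<Omega> adj c ?\<alpha> r a = b"
    using local_perm_aut_of_portrait[OF bij compat reduced_word_Nil, of r r] a by simp
  then have \<alpha>_edge: "c r (?\<alpha> (nb r a)) = b"
    using aut_of_portrait_root[OF bij compat] by (simp add: local_perm_def a)
  have G_Aut: "G_grp \<Omega> adj c F \<subseteq> Aut adj" by (auto simp: G_grp_def)
  have "?\<alpha> \<in> perm_topology adj closure_of (G_grp \<Omega> adj c F)" using \<alpha>_Aut dense by simp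
  then obtain g where g: "g \<in> G_grp \<Omega> adj c F" "\<forall>x\<in>{r, nb r a}. g x = ?\<alpha> x"
    unfolding in_closure_perm_topology[OF G_Aut] by blast
  have "\<not> breaks_orbit F g r (nb r a)"
    using G_grp_not_breaks_orbit[OF F g(1) adj_nbr_c_nbr(1)[OF a]] .
  then show "\<exists>f\<in>F. f a = b"
    using g(2) \<alpha>_edge aut_of_portrait_root[OF bij compat] adj_nbr_c_nbr(2)[OF a]
    by (simp add: breaks_orbit_def)
qed

lemma closure_G_grp_if_transitive:
  assumes F: "subgroup F (BijGroup \<Omega>)" and tr: "transitive_on \<Omega> F"
  shows "perm_topology adj closure_of (G_grp \<Omega> adj c F) = Aut adj"
proof -
  have hat: "hat \<Omega> F = Bij \<Omega>"
    using hat_eq_Bij_if_transitive[OF tr subgroup_BijGroup_subset_Bij[OF F]] .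
  have "G2_grp \<Omega> adj c F (Bij \<Omega>) = G_grp \<Omega> adj c F" "U_grp \<Omega> adj c (Bij \<Omega>) = Aut adj"
    using local_perm_Bij by (auto simp: G2_grp_def G_grp_def U_grp_def)
  then show ?thesis
    using closure_G2_grp[OF subgroup_BijGroup_subset_Bij[OF F] _ subgroup_BijGroup_id[OF F]] hat
    by simp
qed

end

theorem mainTheorem14:
  fixes \<Omega> :: "'c set" and d :: nat
    and adj :: "'v \<Rightarrow> 'v \<Rightarrow> bool" and c :: "'v \<Rightarrow> 'v \<Rightarrow> 'c"
    and F F' :: "('c \<Rightarrow> 'c) set"
  assumes "colored_regular_tree \<Omega> d adj c"
    and "d \<ge> 3"
    and "subgroup F (BijGroup \<Omega>)"
    and "subgroup F' (BijGroup \<Omega>)"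
    and "F \<subseteq> F'"
    and "F' \<subseteq> hat \<Omega> F"
  shows "perm_topology adj closure_of (G2_grp \<Omega> adj c F F') = U_grp \<Omega> adj c F'
         \<and> (perm_topology adj closure_of (G_grp \<Omega> adj c F) = Aut adj
              \<longleftrightarrow> transitive_on \<Omega> F)"
proof -
  interpret colored_tree \<Omega> d adj c by (rule colored_tree.intro) (rule assms(1))
  show ?thesis
    using closure_G2_grp[OF assms(5,6) subgroup_BijGroup_id[OF assms(3)]]
      transitive_if_closure_G_grp[OF assms(3)] closure_G_grp_if_transitive[OF assms(3)]
    by blast
qed

end
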